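(* Let $\Gamma$ be a finite dynamic game with ordinal preferences and perfect recall. Then $\mathbb S^k(S)\neq\emptyset$ for every $k\in\mathbb N$ (so $\mathbb S^\infty(S)\ne\emptyset$), and there exists $K\in\mathbb N$ with $\mathbb S^K(S)=\mathbb S^{K+1}(S)=\mathbb S^\infty(S)\neq\emptyset$.
   Context: A finite dynamic game with ordinal preferences and perfect recall $\Gamma$ consists of: a finite set of players $I$; a finite rooted tree of histories (finite sequences of action profiles, simultaneous moves allowed) with terminal histories $Z$; for each $i$ a partition $H_i$ of the non-terminal histories where $i$ is active (at least two actions) into information sets with identical available actions; perfect recall; complete transitive preferences $\succsim_i$ on $Z$. Strategies of $i$ are equivalence classes of behaviorally equivalent standard strategies (action assignments to $H_i$, identified when they allow the same information sets and prescribe the same actions there); $S_i$ finite set of strategies, $S=\prod_jS_j$, $S_{-i}=\prod_{j\ne i}S_j$, $\zeta:S\to Z$ the outcome map. For $h\in H_i$, $S_i(h)$, $S_{-i}(h)$ are strategies of $i$, resp. profiles of others, reaching $h$; $H_i(s_i)=\{h\in H_i:s_i\in S_i(h)\}$. A restriction is a nonempty $R=\prod_jR_j\subseteq S$; $R_i(h)=R_i\cap S_i(h)$, $R_{-i}(h)=R_{-i}\cap S_{-i}(h)$, $R^i(h)=R_i(h)\times R_{-i}(h)$. $\mathcal U_i$ is the set of $u_i:Z\to\mathbb R$ with $u_i(z)\ge u_i(z')\iff z\succsim_iz'$. $\mathcal H_i=\{S_{-i}(h):h\in H_i\}$; a CPS on $(S_{-i},\mathcal H_i)$ is a family of probability measures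 $\mu_i(\cdot\mid E)$ on $S_{-i}$, $E\in\mathcal H_i$, with $\mu_i(E\mid E)=1$ and $\mu_i(A\mid E)=\mu_i(A\mid E')\mu_i(E'\mid E)$ whenever $A\subseteq E'\subseteq E$, $E,E'\in\mathcal H_i$. $\Delta^{\mathcal H_i}(R_{-i})$ is the set of CPSs with $\mu_i(R_{-i}(h)\mid S_{-i}(h))=1$ for every $h\in H_i$ with $R^i(h)\ne\emptyset$. $s^*_i\in R_i$ is sequentially rational given $R$ if there are $u_i\in\mathcal U_i$, $\mu_i\in\Delta^{\mathcal H_i}(R_{-i})$ such that for all $h\in H_i(s^*_i)$ with $R^i(h)\ne\emptyset$ and all $s_i\in R_i(h)$, $\sum_{s_{-i}\in R_{-i}}u_i(\zeta(s^*_i,s_{-i}))\mu_i(\{s_{-i}\}\mid S_{-i}(h))\ge\sum_{s_{-i}\in R_{-i}}u_i(\zeta(s_i,s_{-i}))\mu_i(\{s_{-i}\}\mid S_{-i}(h))$. Ordinal Strong Rationalizability: $\mathbb S_i(R)$ is the set of $s_i\in R_i$ sequentially rational given $R$, $\mathbb S(R)=\prod_j\mathbb S_j(R)$, $\mathbb S^0(S)=S$, $\mathbb S^n(S)=\mathbb S(\mathbb S^{n-1}(S))$, $\mathbb S^\infty(S)=\bigcap_\ell\mathbb S^\ell(S)$. *)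

theory Defs
  imports Complex_Main
begin

text \<open>Players form a finite type 'i (the finite player set I is UNIV).  An action profile is a function 'i => 'a (simultaneous moves); inactive players
have a single feasible action.\<close>

type_synonym ('i, 'a) hist = "('i \<Rightarrow> 'a) list"
type_synonym ('i, 'a) infoset = "('i, 'a) hist set"
type_synonym ('i, 'a) stdstrat = "('i, 'a) infoset \<Rightarrow> 'a"
type_synonym ('i, 'a) strat = "('i, 'a) stdstrat set"   \<comment> \<open>equivalence class\<close>
type_synonym ('i, 'a) profile = "'i \<Rightarrow> ('i, 'a) strat"

record ('i, 'a) game =
  hist :: "('i, 'a) hist set"
  infos :: "'i \<Rightarrow> ('i, 'a) infoset set"
  pref :: "'i \<Rightarrow> ('i, 'a) hist \<Rightarrow> ('i, 'a) hist \<Rightarrow> bool" \<comment> \<open>pref G i z z' : z \<succeq>_i z'\<close>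

definition terminal :: "('i, 'a) game \<Rightarrow> ('i, 'a) hist set" where
  "terminal G = {z \<in> hist G. \<not> (\<exists>p. z @ [p] \<in> hist G)}"

definition acts :: "('i, 'a) game \<Rightarrow> 'i \<Rightarrow> ('i, 'a) hist \<Rightarrow> 'a set" where
  "acts G i x = {a. \<exists>p. x @ [p] \<in> hist G \<and> p i = a}"

definition active :: "('i, 'a) game \<Rightarrow> 'i \<Rightarrow> ('i, 'a) hist \<Rightarrow> bool" where
  "active G i x \<longleftrightarrow> x \<in> hist G - terminal G \<and> card (acts G i x) \<ge> 2"

definition cellof :: "('i, 'a) game \<Rightarrow> 'i \<Rightarrow> ('i, 'a) hist \<Rightarrow> ('i, 'a) infoset" where
  "cellof G i x = (THE C. C \<in> infos G i \<and> x \<in> C)"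

definition experience :: "('i, 'a) game \<Rightarrow> 'i \<Rightarrow> ('i, 'a) hist \<Rightarrow> (('i, 'a) infoset \<times> 'a) list" where
  "experience G i x =
     map (\<lambda>k. (cellof G i (take k x), (x ! k) i)) (filter (\<lambda>k. active G i (take k x)) [0..<length x])"

definition finite_game :: "('i::finite, 'a) game \<Rightarrow> bool" where
  "finite_game G \<longleftrightarrow>
     finite (hist G) \<and> [] \<in> hist G
     \<and> (\<forall>x y. x @ y \<in> hist G \<longrightarrow> x \<in> hist G)
     \<and> (\<forall>x \<in> hist G - terminal G. \<forall>p. x @ [p] \<in> hist G \<longleftrightarrow> (\<forall>j. p j \<in> acts G j x))
     \<and> (\<forall>i. (\<forall>C \<in> infos G i. C \<noteq> {})
           \<and> (\<forall>C \<in> infos G i. \<forall>D \<in> infos G i. C \<noteq> D \<longrightarrow> C \<inter> D = {})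
           \<and> \<Union>(infos G i) = {x. active G i x}
           \<and> (\<forall>C \<in> infos G i. \<forall>x \<in> C. \<forall>y \<in> C. acts G i x = acts G i y))
     \<and> (\<forall>i. \<forall>C \<in> infos G i. \<forall>x \<in> C. \<forall>y \<in> C. experience G i x = experience G i y)
     \<and> (\<forall>i. (\<forall>z \<in> terminal G. \<forall>z' \<in> terminal G. pref G i z z' \<or> pref G i z' z)
           \<and> (\<forall>z1 \<in> terminal G. \<forall>z2 \<in> terminal G. \<forall>z3 \<in> terminal G.
                 pref G i z1 z2 \<longrightarrow> pref G i z2 z3 \<longrightarrow> pref G i z1 z3))"

definition stdstrats :: "('i, 'a) game \<Rightarrow> 'i \<Rightarrow> ('i, 'a) stdstrat set" where
  "stdstrats G i = {\<sigma>. (\<forall>C \<in> infos G i. \<forall>x \<in> C. \<sigma> C \<in> acts G i x)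
                      \<and> (\<forall>C. C \<notin> infos G i \<longrightarrow> \<sigma> C = undefined)}"

definition consistent :: "('i, 'a) game \<Rightarrow> 'i \<Rightarrow> ('i, 'a) stdstrat \<Rightarrow> ('i, 'a) hist \<Rightarrow> bool" where
  "consistent G i \<sigma> x \<longleftrightarrow>
     (\<forall>k < length x. active G i (take k x) \<longrightarrow> (x ! k) i = \<sigma> (cellof G i (take k x)))"

definition allows :: "('i, 'a) game \<Rightarrow> 'i \<Rightarrow> ('i, 'a) stdstrat \<Rightarrow> ('i, 'a) infoset \<Rightarrow> bool" where
  "allows G i \<sigma> C \<longleftrightarrow> (\<exists>x \<in> C. consistent G i \<sigma> x)"

definition beq :: "('i, 'a) game \<Rightarrow> 'i \<Rightarrow> ('i, 'a) stdstrat rel" where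
  "beq G i = {(\<sigma>, \<tau>). \<sigma> \<in> stdstrats G i \<and> \<tau> \<in> stdstrats G i
       \<and> {C \<in> infos G i. allows G i \<sigma> C} = {C \<in> infos G i. allows G i \<tau> C}
       \<and> (\<forall>C \<in> infos G i. allows G i \<sigma> C \<longrightarrow> \<sigma> C = \<tau> C)}"

definition strats :: "('i, 'a) game \<Rightarrow> 'i \<Rightarrow> ('i, 'a) strat set" where
  "strats G i = stdstrats G i // beq G i"

definition cconsistent :: "('i, 'a) game \<Rightarrow> 'i \<Rightarrow> ('i, 'a) strat \<Rightarrow> ('i, 'a) hist \<Rightarrow> bool" where
  "cconsistent G i c x \<longleftrightarrow> (\<exists>\<sigma> \<in> c. consistent G i \<sigma> x)"

definition outcome :: "('i, 'a) game \<Rightarrow> ('i, 'a) profile \<Rightarrow> ('i, 'a) hist" where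
  "outcome G s = (THE z. z \<in> terminal G \<and> (\<forall>j. cconsistent G j (s j) z))"

text \<open>Opponents' profiles s_{-i} are functions undefined at i, with components in R_j.\<close>
definition others :: "'i \<Rightarrow> ('i \<Rightarrow> ('i, 'a) strat set) \<Rightarrow> ('i, 'a) profile set" where
  "others i R = {f. (\<forall>j. j \<noteq> i \<longrightarrow> f j \<in> R j) \<and> f i = undefined}"

definition strats_at :: "('i, 'a) game \<Rightarrow> 'i \<Rightarrow> ('i, 'a) infoset \<Rightarrow> ('i, 'a) strat set" where
  "strats_at G i h = {c \<in> strats G i. \<exists>x \<in> h. cconsistent G i c x}"

definition others_at :: "('i, 'a) game \<Rightarrow> 'i \<Rightarrow> ('i, 'a) infoset \<Rightarrow> ('i, 'a) profile set" where
  "others_at G i h = {f \<in> others i (strats G). \<exists>x \<in> h. \<forall>j. j \<noteq> i \<longrightarrow> cconsistent G j (f j) x}"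

definition infos_of :: "('i, 'a) game \<Rightarrow> 'i \<Rightarrow> ('i, 'a) strat \<Rightarrow> ('i, 'a) infoset set" where
  "infos_of G i c = {h \<in> infos G i. c \<in> strats_at G i h}"

definition utils :: "('i, 'a) game \<Rightarrow> 'i \<Rightarrow> (('i, 'a) hist \<Rightarrow> real) set" where
  "utils G i = {u. \<forall>z \<in> terminal G. \<forall>z' \<in> terminal G. u z \<ge> u z' \<longleftrightarrow> pref G i z z'}"

text \<open>A CPS is given by point masses \<mu> E t = \<mu>(\<lbrace>t\<rbrace> | E); the space S_{-i} is finite.\<close>
definition cprob :: "(('i, 'a) profile set \<Rightarrow> ('i, 'a) profile \<Rightarrow> real)
                     \<Rightarrow> ('i, 'a) profile set \<Rightarrow> ('i, 'a) profile set \<Rightarrow> real" where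
  "cprob \<mu> A E = (\<Sum>t \<in> A. \<mu> E t)"

definition cond_events :: "('i, 'a) game \<Rightarrow> 'i \<Rightarrow> ('i, 'a) profile set set" where
  "cond_events G i = {others_at G i h | h. h \<in> infos G i}"

definition is_cps :: "('i, 'a) game \<Rightarrow> 'i
                      \<Rightarrow> (('i, 'a) profile set \<Rightarrow> ('i, 'a) profile \<Rightarrow> real) \<Rightarrow> bool" where
  "is_cps G i \<mu> \<longleftrightarrow>
     (\<forall>E \<in> cond_events G i.
        (\<forall>t \<in> others i (strats G). \<mu> E t \<ge> 0)
        \<and> cprob \<mu> (others i (strats G)) E = 1
        \<and> cprob \<mu> E E = 1)
     \<and> (\<forall>E \<in> cond_events G i. \<forall>E' \<in> cond_events G i. \<forall>A. A \<subseteq> E' \<longrightarrow> E' \<subseteq> E \<longrightarrow>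
          cprob \<mu> A E = cprob \<mu> A E' * cprob \<mu> E' E)"

definition restr_at :: "('i, 'a) game \<Rightarrow> 'i \<Rightarrow> ('i \<Rightarrow> ('i, 'a) strat set) \<Rightarrow> ('i, 'a) infoset
                        \<Rightarrow> ('i, 'a) strat set" where
  "restr_at G i R h = R i \<inter> strats_at G i h"

definition restr_others_at :: "('i, 'a) game \<Rightarrow> 'i \<Rightarrow> ('i \<Rightarrow> ('i, 'a) strat set) \<Rightarrow> ('i, 'a) infoset
                        \<Rightarrow> ('i, 'a) profile set" where
  "restr_others_at G i R h = others i R \<inter> others_at G i h"

definition cps_given :: "('i, 'a) game \<Rightarrow> 'i \<Rightarrow> ('i \<Rightarrow> ('i, 'a) strat set)
                         \<Rightarrow> (('i, 'a) profile set \<Rightarrow> ('i, 'a) profile \<Rightarrow> real) set" where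
  "cps_given G i R = {\<mu>. is_cps G i \<mu> \<and>
     (\<forall>h \<in> infos G i. restr_at G i R h \<noteq> {} \<and> restr_others_at G i R h \<noteq> {} \<longrightarrow>
        cprob \<mu> (restr_others_at G i R h) (others_at G i h) = 1)}"

definition seq_rational :: "('i, 'a) game \<Rightarrow> 'i \<Rightarrow> ('i \<Rightarrow> ('i, 'a) strat set) \<Rightarrow> ('i, 'a) strat \<Rightarrow> bool" where
  "seq_rational G i R s \<longleftrightarrow> s \<in> R i \<and>
     (\<exists>u \<in> utils G i. \<exists>\<mu> \<in> cps_given G i R.
        \<forall>h \<in> infos_of G i s. restr_at G i R h \<noteq> {} \<and> restr_others_at G i R h \<noteq> {} \<longrightarrow>
          (\<forall>s' \<in> restr_at G i R h.
             (\<Sum>t \<in> others i R. u (outcome G (t(i := s))) * \<mu> (others_at G i h) t)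
             \<ge> (\<Sum>t \<in> others i R. u (outcome G (t(i := s'))) * \<mu> (others_at G i h) t)))"

text \<open>A restriction is represented by its factors R_j; the restriction itself is
  the product set prodR R.\<close>
definition prodR :: "('i \<Rightarrow> ('i, 'a) strat set) \<Rightarrow> ('i, 'a) profile set" where
  "prodR R = {s. \<forall>j. s j \<in> R j}"

definition osr_step :: "('i, 'a) game \<Rightarrow> ('i \<Rightarrow> ('i, 'a) strat set) \<Rightarrow> ('i \<Rightarrow> ('i, 'a) strat set)" where
  "osr_step G R = (\<lambda>i. {s \<in> R i. seq_rational G i R s})"

definition osr :: "('i, 'a) game \<Rightarrow> nat \<Rightarrow> ('i \<Rightarrow> ('i, 'a) strat set)" where
  "osr G n = (osr_step G ^^ n) (strats G)"

definition osr_inf :: "('i, 'a) game \<Rightarrow> ('i, 'a) profile set" where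
  "osr_inf G = (\<Inter>l. prodR (osr G l))"

end

theory Submission
  imports Defs
begin

text \<open>Fix a player \<open>i\<close>, a utility representing her preferences, and let \<open>L m\<close> be the set of
  opponents' profiles surviving \<open>m\<close> rounds of elimination. A strategy that lexicographically
  maximizes the total utility against \<open>L (n - 1)\<close>, then against \<open>L (n - 2)\<close>, and so on down
  to \<open>L 0\<close>, survives \<open>n\<close> rounds. Indeed, it is sequentially rational for the beliefs that
  condition each information set \<open>h\<close> on the deepest layer \<open>L m\<close> its opponent event meets,
  uniformly: these form a conditional probability system concentrated on survivors whenever
  possible. A strategy doing better at \<open>h\<close> could be spliced into the maximizer at \<open>h\<close> (perfect
  recall makes this well defined), which would raise its total on that layer without changing any
  deeper one. Since the elimination is a decreasing sequence of restrictions of a finite game, it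
  is constant from some round \<open>K\<close> on, and that round is the limit.\<close>

section \<open>Histories, consistency and strategy classes\<close>

lemma experience_mem:
  "p \<in> set (experience G i z) \<longleftrightarrow>
   (\<exists>k<length z. active G i (take k z) \<and> p = (cellof G i (take k z), (z ! k) i))"
  unfolding experience_def by auto

lemma consistent_iff_experience:
  "consistent G i \<sigma> x \<longleftrightarrow> (\<forall>(C, a) \<in> set (experience G i x). \<sigma> C = a)"
  unfolding consistent_def experience_def by auto

lemma consistent_take: "consistent G i \<sigma> x \<Longrightarrow> consistent G i \<sigma> (take k x)"
  unfolding consistent_def by (auto simp: min_def)

lemma cconsistent_take: "cconsistent G i c x \<Longrightarrow> cconsistent G i c (take k x)"
  unfolding cconsistent_def by (meson consistent_take)

lemma length_experience_take:
  assumes "k \<le> length x"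
  shows "length (experience G i (take k x)) = card {m. m < k \<and> active G i (take m x)}"
proof -
  have "{m. m < length (take k x) \<and> active G i (take m (take k x))}
          = {m. m < k \<and> active G i (take m x)}"
    using assms by (auto simp: min_def)
  then show ?thesis
    unfolding experience_def by (simp add: length_filter_conv_card cong: conj_cong)
qed

lemma terminal_in_hist: "z \<in> terminal G \<Longrightarrow> z \<in> hist G"
  unfolding terminal_def by auto

lemma beq_refl: "\<sigma> \<in> stdstrats G i \<Longrightarrow> (\<sigma>, \<sigma>) \<in> beq G i"
  unfolding beq_def by auto

lemma beq_sym: "(\<sigma>, \<tau>) \<in> beq G i \<Longrightarrow> (\<tau>, \<sigma>) \<in> beq G i"
  unfolding beq_def by auto

lemma class_in_strats: "\<sigma> \<in> stdstrats G i \<Longrightarrow> beq G i `` {\<sigma>} \<in> strats G i"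
  unfolding strats_def by (rule quotientI)

lemma outcome_cong:
  assumes "\<And>z. z \<in> terminal G \<Longrightarrow> (\<forall>j. cconsistent G j (s j) z) \<longleftrightarrow> (\<forall>j. cconsistent G j (s' j) z)"
  shows "outcome G s = outcome G s'"
  unfolding outcome_def using assms by metis

lemma others_mono: "(\<And>j. A j \<subseteq> B j) \<Longrightarrow> others i A \<subseteq> others i B"
  unfolding others_def by blast

lemma finite_others:
  fixes R :: "'i::finite \<Rightarrow> ('i, 'a) strat set"
  assumes "\<And>j. finite (R j)"
  shows "finite (others i R)"
proof -
  have "others i R \<subseteq> {f. \<forall>x. (x \<in> - {i} \<longrightarrow> f x \<in> (\<Union>j. R j)) \<and> (x \<notin> - {i} \<longrightarrow> f x = undefined)}"
    unfolding others_def by auto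
  moreover have "finite (\<Union>j. R j)"
    by (simp add: assms)
  ultimately show ?thesis
    using finite_set_of_finite_funs[of "- {i}" "\<Union>j. R j" undefined] finite_subset by auto
qed

lemma prodR_nonempty:
  assumes "\<And>j. R j \<noteq> {}"
  shows "prodR R \<noteq> {}"
proof -
  have "(\<lambda>j. SOME s. s \<in> R j) \<in> prodR R"
    unfolding prodR_def using assms by (simp add: some_in_eq)
  then show ?thesis
    by blast
qed

lemma prodR_mono: "(\<And>j. A j \<subseteq> B j) \<Longrightarrow> prodR A \<subseteq> prodR B"
  unfolding prodR_def by blast

definition visits :: "('i, 'a) game \<Rightarrow> 'i \<Rightarrow> ('i, 'a) hist \<Rightarrow> ('i, 'a) infoset \<Rightarrow> nat \<Rightarrow> bool" where
  "visits G j x C k \<longleftrightarrow> k < length x \<and> active G j (take k x) \<and> cellof G j (take k x) = C"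

definition stdstrat_along :: "('i, 'a) game \<Rightarrow> 'i \<Rightarrow> ('i, 'a) hist \<Rightarrow> ('i, 'a) stdstrat" where
  "stdstrat_along G j x C =
     (if \<exists>k. visits G j x C k then (x ! (SOME k. visits G j x C k)) j
      else if C \<in> infos G j then (SOME a. a \<in> acts G j (SOME y. y \<in> C)) else undefined)"

lemma cconsistent_fun_upd_iff:
  "(\<forall>j. cconsistent G j ((t(i := d)) j) z)
     \<longleftrightarrow> cconsistent G i d z \<and> (\<forall>j. j \<noteq> i \<longrightarrow> cconsistent G j (t j) z)"
  by (metis fun_upd_other fun_upd_same)

section \<open>Lexicographic maximization and lexicographic beliefs\<close>

text \<open>The criterion \<open>U (n - 1)\<close> has the highest priority and \<open>U 0\<close> the lowest.\<close>
definition lex_maximizer :: "nat \<Rightarrow> (nat \<Rightarrow> 'x \<Rightarrow> 'b::linorder) \<Rightarrow> 'x set \<Rightarrow> 'x \<Rightarrow> bool" where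
  "lex_maximizer n U X x \<longleftrightarrow>
     x \<in> X \<and> (\<forall>y \<in> X. \<forall>d < n. (\<forall>k. d < k \<and> k < n \<longrightarrow> U k y = U k x) \<longrightarrow> U d y \<le> U d x)"

lemma lex_maximizer_exists:
  assumes "finite X" "X \<noteq> {}"
  shows "\<exists>x. lex_maximizer n U X x"
  using assms
proof (induction n arbitrary: X)
  case 0
  then show ?case
    unfolding lex_maximizer_def by auto
next
  case (Suc n)
  define Y where "Y = {x \<in> X. \<forall>y \<in> X. U n y \<le> U n x}"
  have "Max (U n ` X) \<in> U n ` X"
    using Suc.prems by simp
  then obtain x0 where "x0 \<in> X" "U n x0 = Max (U n ` X)"
    by (metis imageE)
  then have "x0 \<in> Y"
    unfolding Y_def using Suc.prems(1) by simp
  then have "Y \<noteq> {}"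
    by blast
  moreover have "finite Y"
    unfolding Y_def using Suc.prems(1) by simp
  ultimately obtain x where x: "lex_maximizer n U Y x"
    using Suc.IH by blast
  have "lex_maximizer (Suc n) U X x"
    unfolding lex_maximizer_def
  proof (intro conjI ballI allI impI)
    show "x \<in> X"
      using x unfolding lex_maximizer_def Y_def by blast
  next
    fix y d
    assume y: "y \<in> X" and d: "d < Suc n" and agree: "\<forall>k. d < k \<and> k < Suc n \<longrightarrow> U k y = U k x"
    show "U d y \<le> U d x"
    proof (cases "d = n")
      case True
      then show ?thesis
        using x y unfolding lex_maximizer_def Y_def by blast
    next
      case False
      then have "U n y = U n x"
        using agree d by simp
      then have "y \<in> Y"
        using x y unfolding lex_maximizer_def Y_def by auto
      then show ?thesis
        using x agree d False unfolding lex_maximizer_def by auto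
    qed
  qed
  then show ?case ..
qed

definition layer_depth :: "nat \<Rightarrow> (nat \<Rightarrow> 'x set) \<Rightarrow> 'x set \<Rightarrow> nat" where
  "layer_depth n L E = Max {m. m < n \<and> E \<inter> L m \<noteq> {}}"

definition deepest_layer :: "nat \<Rightarrow> (nat \<Rightarrow> 'x set) \<Rightarrow> 'x set \<Rightarrow> 'x set" where
  "deepest_layer n L E = E \<inter> L (layer_depth n L E)"

definition lex_belief :: "nat \<Rightarrow> (nat \<Rightarrow> 'x set) \<Rightarrow> 'x set \<Rightarrow> 'x \<Rightarrow> real" where
  "lex_belief n L E t =
     (if t \<in> deepest_layer n L E then 1 / real (card (deepest_layer n L E)) else 0)"

lemma
  assumes "0 < n" "E \<inter> L 0 \<noteq> {}"
  shows layer_depth_less: "layer_depth n L E < n"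
    and deepest_layer_nonempty: "deepest_layer n L E \<noteq> {}"
    and layer_depth_maximal: "m < n \<Longrightarrow> E \<inter> L m \<noteq> {} \<Longrightarrow> m \<le> layer_depth n L E"
proof -
  let ?M = "{m. m < n \<and> E \<inter> L m \<noteq> {}}"
  have "finite ?M" "?M \<noteq> {}"
    using assms by auto
  then show "layer_depth n L E < n" "deepest_layer n L E \<noteq> {}"
    "m < n \<Longrightarrow> E \<inter> L m \<noteq> {} \<Longrightarrow> m \<le> layer_depth n L E"
    unfolding layer_depth_def deepest_layer_def using Max_in[of ?M] Max_ge[of ?M] by auto
qed

lemma deepest_layer_subset:
  assumes "\<And>m m'. m \<le> m' \<Longrightarrow> L m' \<subseteq> L m" "m < n" "E \<inter> L m \<noteq> {}"
  shows "deepest_layer n L E \<subseteq> L m"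
proof -
  have "m \<le> layer_depth n L E"
    by (rule layer_depth_maximal) (use assms in auto)
  then show ?thesis
    unfolding deepest_layer_def using assms(1) by blast
qed

lemma cprob_lex_belief:
  assumes "finite A"
  shows "cprob (lex_belief n L) A E
           = real (card (A \<inter> deepest_layer n L E)) / real (card (deepest_layer n L E))"
proof -
  have "cprob (lex_belief n L) A E
          = (\<Sum>t\<in>A. if t \<in> deepest_layer n L E then 1 / real (card (deepest_layer n L E)) else 0)"
    unfolding cprob_def lex_belief_def ..
  also have "\<dots> = (\<Sum>t \<in> A \<inter> deepest_layer n L E. 1 / real (card (deepest_layer n L E)))"
    by (rule sum.inter_restrict[OF assms, symmetric])
  finally show ?thesis
    by simp
qed

lemma sum_lex_belief:
  assumes "finite A" "deepest_layer n L E \<subseteq> A"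
  shows "(\<Sum>t\<in>A. f t * lex_belief n L E t)
           = (\<Sum>t \<in> deepest_layer n L E. f t) / real (card (deepest_layer n L E))"
proof -
  have "(\<Sum>t\<in>A. f t * lex_belief n L E t)
          = (\<Sum>t\<in>A. if t \<in> deepest_layer n L E then f t / real (card (deepest_layer n L E)) else 0)"
    by (rule sum.cong) (auto simp: lex_belief_def)
  also have "\<dots> = (\<Sum>t \<in> A \<inter> deepest_layer n L E. f t / real (card (deepest_layer n L E)))"
    by (rule sum.inter_restrict[OF assms(1), symmetric])
  also have "A \<inter> deepest_layer n L E = deepest_layer n L E"
    using assms(2) by blast
  finally show ?thesis
    by (simp add: sum_divide_distrib)
qed

lemma cprob_lex_belief_eq_1:
  assumes "0 < n" "E \<inter> L 0 \<noteq> {}" "finite B" "deepest_layer n L E \<subseteq> B"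
  shows "cprob (lex_belief n L) B E = 1"
proof -
  have "B \<inter> deepest_layer n L E = deepest_layer n L E"
    using assms(4) by blast
  moreover have "finite (deepest_layer n L E)"
    by (rule finite_subset[OF assms(4,3)])
  ultimately show ?thesis
    using deepest_layer_nonempty[where L = L, OF assms(1,2)]
    by (simp add: cprob_lex_belief[OF assms(3)])
qed

lemma lex_belief_chain_rule:
  assumes n: "0 < n" and E: "finite E" and A: "A \<subseteq> E'" and E': "E' \<subseteq> E" "E' \<inter> L 0 \<noteq> {}"
  shows "cprob (lex_belief n L) A E = cprob (lex_belief n L) A E' * cprob (lex_belief n L) E' E"
proof -
  have fin: "finite E'" "finite A"
    using finite_subset[OF E'(1) E] finite_subset[OF A] by blast+
  have E0: "E \<inter> L 0 \<noteq> {}"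
    using E' by blast
  let ?d = "layer_depth n L E"
  show ?thesis
  proof (cases "E' \<inter> L ?d = {}")
    case True
    then have "A \<inter> deepest_layer n L E = {}" "E' \<inter> deepest_layer n L E = {}"
      using A unfolding deepest_layer_def by blast+
    then show ?thesis
      by (simp add: cprob_lex_belief fin)
  next
    case False
    have "?d \<le> layer_depth n L E'"
      using layer_depth_less[where L = L, OF n E0] False
      by (rule layer_depth_maximal[where L = L, OF n E'(2)])
    moreover have "E \<inter> L (layer_depth n L E') \<noteq> {}"
      using deepest_layer_nonempty[where L = L, OF n E'(2)] E'(1)
      unfolding deepest_layer_def by blast
    then have "layer_depth n L E' \<le> ?d"
      by (rule layer_depth_maximal[where L = L, OF n E0 layer_depth_less[where L = L, OF n E'(2)]])
    ultimately have "layer_depth n L E' = ?d"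
      by simp
    then have layers: "deepest_layer n L E' = E' \<inter> L ?d"
      "A \<inter> deepest_layer n L E = A \<inter> L ?d" "A \<inter> deepest_layer n L E' = A \<inter> L ?d"
      "E' \<inter> deepest_layer n L E = E' \<inter> L ?d" "A \<inter> (E' \<inter> L ?d) = A \<inter> L ?d"
      using A E'(1) by (auto simp: deepest_layer_def)
    have "real (card (E' \<inter> L ?d)) \<noteq> 0"
      using False fin(1) by simp
    then show ?thesis
      by (simp add: cprob_lex_belief fin layers)
  qed
qed

section \<open>Stabilization of the elimination procedure\<close>

lemma funpow_decreasing_stabilizes:
  fixes F :: "'x::order \<Rightarrow> 'x"
  assumes decreasing: "\<And>y. F y \<le> y" and finite_range: "finite (range (\<lambda>n. (F ^^ n) x))"
  shows "\<exists>K. \<forall>n \<ge> K. (F ^^ n) x = (F ^^ K) x"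
proof -
  let ?f = "\<lambda>n. (F ^^ n) x"
  have "\<exists>K. ?f (Suc K) = ?f K"
  proof (rule ccontr)
    assume "\<nexists>K. ?f (Suc K) = ?f K"
    then have step: "?f (Suc n) < ?f n" for n
      using decreasing[of "?f n"] by (simp add: order.strict_iff_order)
    have less: "?f (m + Suc k) < ?f m" for m k
    proof (induction k)
      case 0
      show ?case
        using step[of m] by simp
    next
      case (Suc k)
      have "?f (m + Suc (Suc k)) < ?f (m + Suc k)"
        using step[of "m + Suc k"] by simp
      then show ?case
        using Suc.IH by (rule order.strict_trans)
    qed
    have "inj ?f"
    proof (rule injI)
      fix m m' assume eq: "?f m = ?f m'"
      show "m = m'"
        using less[of m "m' - Suc m"] less[of m' "m - Suc m'"] eq
        by (cases m m' rule: linorder_cases) auto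
    qed
    then show False
      using finite_range finite_imageD by blast
  qed
  then obtain K where K: "?f (Suc K) = ?f K" ..
  have "?f n = ?f K" if "K \<le> n" for n
    using that by (induction n rule: dec_induct) (use K in \<open>auto simp: funpow_swap1\<close>)
  then show ?thesis
    by blast
qed

lemma osr_Suc: "osr G (Suc m) = osr_step G (osr G m)"
  unfolding osr_def by simp

lemma osr_antimono: "m \<le> m' \<Longrightarrow> osr G m' j \<subseteq> osr G m j"
  by (induction m' rule: dec_induct) (auto simp: osr_Suc osr_step_def)

lemma osr_subset_strats: "osr G m j \<subseteq> strats G j"
  using osr_antimono[of 0 m G j] by (simp add: osr_def)

lemma osr_inf_eq_stable:
  assumes "\<And>n. K \<le> n \<Longrightarrow> osr G n = osr G K"
  shows "osr_inf G = prodR (osr G K)"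
proof
  show "osr_inf G \<subseteq> prodR (osr G K)"
    unfolding osr_inf_def by blast
  have "prodR (osr G K) \<subseteq> prodR (osr G l)" for l
    using assms[of l] osr_antimono[of l K G] by (cases "l \<le> K") (simp_all add: prodR_mono)
  then show "prodR (osr G K) \<subseteq> osr_inf G"
    unfolding osr_inf_def by blast
qed

section \<open>Finite games with perfect recall\<close>

locale finite_dyn_game =
  fixes G :: "('i::finite, 'a) game"
  assumes finite_game: "finite_game G"
begin

lemma finite_hist: "finite (hist G)"
  using finite_game unfolding finite_game_def by (elim conjE) assumption

lemma Nil_in_hist: "[] \<in> hist G"
  using finite_game unfolding finite_game_def by (elim conjE) assumption

lemma hist_prefix_closed: "x @ y \<in> hist G \<Longrightarrow> x \<in> hist G"
proof -
  have "\<forall>x y. x @ y \<in> hist G \<longrightarrow> x \<in> hist G"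
    using finite_game unfolding finite_game_def by (elim conjE) assumption
  then show "x @ y \<in> hist G \<Longrightarrow> x \<in> hist G"
    by blast
qed

lemma information_partition:
  "\<forall>i. (\<forall>C \<in> infos G i. C \<noteq> {})
     \<and> (\<forall>C \<in> infos G i. \<forall>D \<in> infos G i. C \<noteq> D \<longrightarrow> C \<inter> D = {})
     \<and> \<Union>(infos G i) = {x. active G i x}
     \<and> (\<forall>C \<in> infos G i. \<forall>x \<in> C. \<forall>y \<in> C. acts G i x = acts G i y)"
  using finite_game unfolding finite_game_def by (elim conjE) assumption

lemma infos_nonempty: "C \<in> infos G i \<Longrightarrow> C \<noteq> {}"
  using information_partition[THEN spec[of _ i], THEN conjunct1] by blast

lemma infos_disjoint: "C \<in> infos G i \<Longrightarrow> D \<in> infos G i \<Longrightarrow> x \<in> C \<Longrightarrow> x \<in> D \<Longrightarrow> C = D"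
  using information_partition[THEN spec[of _ i], THEN conjunct2, THEN conjunct1] by blast

lemma Union_infos: "\<Union>(infos G i) = {x. active G i x}"
  using information_partition[THEN spec[of _ i], THEN conjunct2, THEN conjunct2, THEN conjunct1] .

lemma acts_eq_infoset: "C \<in> infos G i \<Longrightarrow> x \<in> C \<Longrightarrow> y \<in> C \<Longrightarrow> acts G i x = acts G i y"
  using information_partition[THEN spec[of _ i], THEN conjunct2, THEN conjunct2, THEN conjunct2]
  by blast

lemma perfect_recall: "C \<in> infos G i \<Longrightarrow> x \<in> C \<Longrightarrow> y \<in> C \<Longrightarrow> experience G i x = experience G i y"
proof -
  have "\<forall>i. \<forall>C \<in> infos G i. \<forall>x \<in> C. \<forall>y \<in> C. experience G i x = experience G i y"
    using finite_game unfolding finite_game_def by (elim conjE) assumption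
  then show "C \<in> infos G i \<Longrightarrow> x \<in> C \<Longrightarrow> y \<in> C \<Longrightarrow> experience G i x = experience G i y"
    by blast
qed

lemma pref_weak_order:
  "\<forall>i. (\<forall>z \<in> terminal G. \<forall>z' \<in> terminal G. pref G i z z' \<or> pref G i z' z)
     \<and> (\<forall>z1 \<in> terminal G. \<forall>z2 \<in> terminal G. \<forall>z3 \<in> terminal G.
           pref G i z1 z2 \<longrightarrow> pref G i z2 z3 \<longrightarrow> pref G i z1 z3)"
  using finite_game unfolding finite_game_def by (elim conjE) assumption

lemma take_in_hist: "x \<in> hist G \<Longrightarrow> take k x \<in> hist G"
  by (metis append_take_drop_id hist_prefix_closed)

lemma infoset_active: "C \<in> infos G i \<Longrightarrow> x \<in> C \<Longrightarrow> active G i x"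
  using Union_infos by blast

lemma infoset_in_hist: "C \<in> infos G i \<Longrightarrow> x \<in> C \<Longrightarrow> x \<in> hist G"
  using infoset_active unfolding active_def by blast

lemma cellof_eqI: "C \<in> infos G i \<Longrightarrow> x \<in> C \<Longrightarrow> cellof G i x = C"
  unfolding cellof_def by (rule the_equality) (auto dest: infos_disjoint)

lemma cellof_mem:
  assumes "active G i x"
  shows "cellof G i x \<in> infos G i" "x \<in> cellof G i x"
proof -
  obtain C where "C \<in> infos G i" "x \<in> C"
    using assms Union_infos by blast
  then show "cellof G i x \<in> infos G i" "x \<in> cellof G i x"
    using cellof_eqI by simp_all
qed

lemma consistent_infoset_cong:
  "C \<in> infos G i \<Longrightarrow> x \<in> C \<Longrightarrow> y \<in> C \<Longrightarrow> consistent G i \<sigma> x \<longleftrightarrow> consistent G i \<sigma> y"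
  unfolding consistent_iff_experience using perfect_recall by metis

text \<open>By perfect recall a history never passes twice through the same information set:
  the two prefixes would have experiences of different lengths.\<close>
lemma cellof_take_inj:
  assumes "k < length x" "k' < length x"
    and "active G i (take k x)" "active G i (take k' x)"
    and "cellof G i (take k x) = cellof G i (take k' x)"
  shows "k = k'"
proof -
  have no_repeat: False
    if "k1 < k2" "k2 < length x" "active G i (take k1 x)" "active G i (take k2 x)"
    "cellof G i (take k1 x) = cellof G i (take k2 x)" for k1 k2
  proof -
    let ?A = "\<lambda>k. {m. m < k \<and> active G i (take m x)}"
    have "experience G i (take k1 x) = experience G i (take k2 x)"
      using perfect_recall[OF cellof_mem(1,2)[OF that(4)]] cellof_mem(2)[OF that(3)] that(5) by simp
    then have same_card: "card (?A k1) = card (?A k2)"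
      using that(1,2) length_experience_take[of k1 x G i] length_experience_take[of k2 x G i]
      by simp
    have "?A k1 \<subset> ?A k2"
      using that by auto
    then have "card (?A k1) < card (?A k2)"
      by (intro psubset_card_mono) simp_all
    then show False
      using same_card by simp
  qed
  show ?thesis
  proof (rule linorder_cases[of k k'])
    assume "k < k'"
    then show ?thesis
      using no_repeat[OF _ assms(2,3,4,5)] by blast
  next
    assume "k' < k"
    then show ?thesis
      using no_repeat[OF _ assms(1,4,3) assms(5)[symmetric]] by blast
  qed
qed

lemma acts_finite: "finite (acts G j v)"
proof -
  have "acts G j v = (\<lambda>p. p j) ` ((\<lambda>p. v @ [p]) -` hist G)"
    unfolding acts_def by auto
  moreover have "finite ((\<lambda>p. v @ [p]) -` hist G)"
    by (rule finite_vimageI) (use finite_hist in \<open>auto simp: inj_on_def\<close>)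
  ultimately show ?thesis
    by simp
qed

lemma consistent_beq:
  assumes "(\<sigma>, \<tau>) \<in> beq G i" "consistent G i \<sigma> z"
  shows "consistent G i \<tau> z"
  unfolding consistent_def
proof (intro allI impI)
  fix k
  assume k: "k < length z" "active G i (take k z)"
  let ?C = "cellof G i (take k z)"
  have "allows G i \<sigma> ?C"
    unfolding allows_def using cellof_mem(2)[OF k(2)] consistent_take[OF assms(2)] by blast
  then have "\<sigma> ?C = \<tau> ?C"
    using assms(1) cellof_mem(1)[OF k(2)] unfolding beq_def by blast
  then show "(z ! k) i = \<tau> ?C"
    using assms(2) k unfolding consistent_def by simp
qed

lemma cconsistent_class_iff:
  assumes "\<sigma> \<in> stdstrats G i"
  shows "cconsistent G i (beq G i `` {\<sigma>}) z \<longleftrightarrow> consistent G i \<sigma> z"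
proof
  assume "cconsistent G i (beq G i `` {\<sigma>}) z"
  then obtain \<tau> where "(\<sigma>, \<tau>) \<in> beq G i" "consistent G i \<tau> z"
    unfolding cconsistent_def by blast
  then show "consistent G i \<sigma> z"
    by (blast intro: consistent_beq beq_sym)
next
  assume "consistent G i \<sigma> z"
  then show "cconsistent G i (beq G i `` {\<sigma>}) z"
    unfolding cconsistent_def using beq_refl[OF assms] by blast
qed

lemma strat_representative:
  assumes "c \<in> strats G i"
  shows "\<exists>\<sigma> \<in> stdstrats G i. \<forall>z. cconsistent G i c z \<longleftrightarrow> consistent G i \<sigma> z"
proof -
  obtain \<sigma> where "\<sigma> \<in> stdstrats G i" "c = beq G i `` {\<sigma>}"
    using assms unfolding strats_def by (auto elim: quotientE)
  then show ?thesis
    by (auto simp: cconsistent_class_iff)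
qed

lemma next_profile_unique:
  assumes p: "v @ [p] \<in> hist G" and q: "v @ [q] \<in> hist G"
    and cp: "\<And>j. consistent G j (\<sigma>s j) (v @ [p])" and cq: "\<And>j. consistent G j (\<sigma>s j) (v @ [q])"
  shows "p = q"
proof
  fix j
  show "p j = q j"
  proof (cases "active G j v")
    case True
    have "p j = \<sigma>s j (cellof G j v)" "q j = \<sigma>s j (cellof G j v)"
      using cp[of j] cq[of j] True unfolding consistent_def by (auto dest!: spec[of _ "length v"])
    then show ?thesis
      by simp
  next
    case False
    have "v \<in> hist G - terminal G"
      using p hist_prefix_closed unfolding terminal_def by blast
    with False have "card (acts G j v) \<le> Suc 0"
      unfolding active_def by simp
    moreover have "p j \<in> acts G j v" "q j \<in> acts G j v"
      using p q unfolding acts_def by auto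
    ultimately show ?thesis
      using acts_finite card_le_Suc0_iff_eq by blast
  qed
qed

lemma terminal_extends_consistent_history:
  assumes x: "x \<in> hist G" and z: "z \<in> terminal G"
    and cx: "\<And>j. consistent G j (\<sigma>s j) x" and cz: "\<And>j. consistent G j (\<sigma>s j) z"
  shows "take (length x) z = x"
proof -
  have "take k z = take k x" if "k \<le> length x" for k
    using that
  proof (induction k)
    case 0
    show ?case
      by simp
  next
    case (Suc k)
    then have IH: "take k z = take k x" and k: "k < length x"
      by simp_all
    have x_step: "take k x @ [x ! k] \<in> hist G"
      using take_in_hist[OF x, of "Suc k"] k by (simp add: take_Suc_conv_app_nth)
    have "k < length z"
    proof (rule ccontr)
      assume "\<not> k < length z"
      then have "z = take k x"
        using IH by simp
      then show False
        using x_step z unfolding terminal_def by blast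
    qed
    then have z_take: "take (Suc k) z = take k x @ [z ! k]"
      using IH by (simp add: take_Suc_conv_app_nth)
    have "z ! k = x ! k"
    proof (rule next_profile_unique)
      show "take k x @ [z ! k] \<in> hist G"
        using take_in_hist[OF terminal_in_hist[OF z], of "Suc k"] z_take by simp
      show "consistent G j (\<sigma>s j) (take k x @ [z ! k])" for j
        using consistent_take[OF cz, of j "Suc k"] z_take by simp
      show "consistent G j (\<sigma>s j) (take k x @ [x ! k])" for j
        using consistent_take[OF cx, of j "Suc k"] k by (simp add: take_Suc_conv_app_nth)
    qed (rule x_step)
    then show ?case
      using z_take k by (simp add: take_Suc_conv_app_nth)
  qed
  then show ?thesis
    by simp
qed

lemma terminal_extends_cconsistent_history:
  assumes q: "\<And>j. q j \<in> strats G j" and "x \<in> hist G" "z \<in> terminal G"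
    and "\<And>j. cconsistent G j (q j) x" "\<And>j. cconsistent G j (q j) z"
  shows "take (length x) z = x"
proof -
  have "\<forall>j. \<exists>\<sigma>. \<forall>y. cconsistent G j (q j) y \<longleftrightarrow> consistent G j \<sigma> y"
    using strat_representative[OF q] by blast
  then obtain \<sigma>s where "\<And>j y. cconsistent G j (q j) y \<longleftrightarrow> consistent G j (\<sigma>s j) y"
    by metis
  then show ?thesis
    using terminal_extends_consistent_history[OF assms(2,3), of \<sigma>s] assms(4,5) by simp
qed

lemma visits_unique: "visits G j x C k \<Longrightarrow> (SOME k. visits G j x C k) = k"
  using cellof_take_inj unfolding visits_def by (smt (verit) someI)

lemma stdstrat_along_stdstrat:
  assumes x: "x \<in> hist G"
  shows "stdstrat_along G j x \<in> stdstrats G j"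
  unfolding stdstrats_def
proof (intro CollectI conjI ballI allI impI)
  fix C y
  assume C: "C \<in> infos G j" and y: "y \<in> C"
  show "stdstrat_along G j x C \<in> acts G j y"
  proof (cases "\<exists>k. visits G j x C k")
    case True
    then obtain k where k: "visits G j x C k" ..
    have "take k x @ [x ! k] \<in> hist G"
      using take_in_hist[OF x, of "Suc k"] k
      unfolding visits_def by (simp add: take_Suc_conv_app_nth)
    then have "(x ! k) j \<in> acts G j (take k x)"
      unfolding acts_def by auto
    moreover have "take k x \<in> C"
      using cellof_mem(2)[of j "take k x"] k unfolding visits_def by auto
    ultimately show ?thesis
      using acts_eq_infoset[OF C _ y] visits_unique[OF k] True unfolding stdstrat_along_def by auto
  next
    case False
    define y0 where "y0 = (SOME y. y \<in> C)"
    have y0: "y0 \<in> C"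
      using y someI unfolding y0_def by metis
    have "card (acts G j y0) \<ge> 2"
      using infoset_active[OF C y0] unfolding active_def by auto
    then have "(SOME a. a \<in> acts G j y0) \<in> acts G j y0"
      by (simp add: some_in_eq) (metis card.empty not_numeral_le_zero)
    then show ?thesis
      using False C acts_eq_infoset[OF C y0 y] unfolding stdstrat_along_def y0_def by auto
  qed
next
  fix C
  assume "C \<notin> infos G j"
  then show "stdstrat_along G j x C = undefined"
    using cellof_mem(1) unfolding stdstrat_along_def visits_def by auto
qed

lemma consistent_stdstrat_along: "consistent G j (stdstrat_along G j x) x"
  unfolding consistent_def
proof (intro allI impI)
  fix k
  assume "k < length x" "active G j (take k x)"
  then have "visits G j x (cellof G j (take k x)) k"
    unfolding visits_def by simp
  then show "(x ! k) j = stdstrat_along G j x (cellof G j (take k x))"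
    using visits_unique unfolding stdstrat_along_def by auto
qed

lemma exists_strat_cconsistent:
  assumes "x \<in> hist G"
  shows "\<exists>c \<in> strats G j. cconsistent G j c x"
  using stdstrat_along_stdstrat[OF assms] consistent_stdstrat_along
  by (intro bexI[of _ "beq G j `` {stdstrat_along G j x}"])
    (simp_all add: class_in_strats cconsistent_class_iff)

lemma strats_nonempty: "strats G j \<noteq> {}"
  using exists_strat_cconsistent[OF Nil_in_hist] by blast

lemma finite_infos: "finite (infos G i)"
proof -
  have "infos G i \<subseteq> Pow (hist G)"
    using infoset_in_hist by blast
  then show ?thesis
    by (rule finite_subset) (simp add: finite_hist)
qed

lemma finite_stdstrats: "finite (stdstrats G i)"
proof -
  let ?B = "\<Union>y \<in> hist G. acts G i y"
  have "stdstrats G i \<subseteq> {f. \<forall>C. (C \<in> infos G i \<longrightarrow> f C \<in> ?B) \<and> (C \<notin> infos G i \<longrightarrow> f C = undefined)}"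
  proof (intro subsetI CollectI allI conjI impI)
    fix \<sigma> C
    assume \<sigma>: "\<sigma> \<in> stdstrats G i"
    then show "C \<notin> infos G i \<Longrightarrow> \<sigma> C = undefined"
      unfolding stdstrats_def by blast
    assume C: "C \<in> infos G i"
    obtain y where y: "y \<in> C"
      using infos_nonempty[OF C] by blast
    have "\<sigma> C \<in> acts G i y"
      using \<sigma> C y unfolding stdstrats_def by blast
    then show "\<sigma> C \<in> ?B"
      using infoset_in_hist[OF C y] by blast
  qed
  moreover have "finite ?B"
    using finite_hist acts_finite by simp
  ultimately show ?thesis
    by (rule finite_subset[OF _ finite_set_of_finite_funs[OF finite_infos]])
qed

lemma finite_strats: "finite (strats G i)"
  unfolding strats_def by (rule finite_quotient) (auto simp: finite_stdstrats beq_def)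

lemma finite_others_strats: "finite (others i (strats G))"
  by (rule finite_others) (rule finite_strats)

lemma finite_osr: "finite (osr G m j)"
  by (rule finite_subset[OF osr_subset_strats finite_strats])

lemma others_at_nonempty:
  assumes h: "h \<in> infos G i"
  shows "others_at G i h \<noteq> {}"
proof -
  obtain x where x: "x \<in> h"
    using infos_nonempty[OF h] by blast
  have "\<forall>j. \<exists>c. c \<in> strats G j \<and> cconsistent G j c x"
    using exists_strat_cconsistent[OF infoset_in_hist[OF h x]] by blast
  then obtain cs where "\<And>j. cs j \<in> strats G j \<and> cconsistent G j (cs j) x"
    by metis
  then have "cs(i := undefined) \<in> others_at G i h"
    unfolding others_at_def others_def using x by auto
  then show ?thesis
    by blast
qed

end

section \<open>Splicing strategies\<close>

definition infos_after :: "('i, 'a) game \<Rightarrow> 'i \<Rightarrow> ('i, 'a) infoset \<Rightarrow> ('i, 'a) infoset set" where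
  "infos_after G i h = {C \<in> infos G i. \<exists>y \<in> C. \<exists>m \<le> length y. take m y \<in> h}"

definition splice_after :: "('i, 'a) game \<Rightarrow> 'i \<Rightarrow> ('i, 'a) infoset
                            \<Rightarrow> ('i, 'a) stdstrat \<Rightarrow> ('i, 'a) stdstrat \<Rightarrow> ('i, 'a) stdstrat" where
  "splice_after G i h \<sigma> \<sigma>' C = (if C \<in> infos_after G i h then \<sigma>' C else \<sigma> C)"

context finite_dyn_game
begin

lemma splice_after_stdstrat:
  "\<sigma> \<in> stdstrats G i \<Longrightarrow> \<sigma>' \<in> stdstrats G i \<Longrightarrow> splice_after G i h \<sigma> \<sigma>' \<in> stdstrats G i"
  unfolding stdstrats_def splice_after_def by auto

lemma visit_after_passes_through:
  assumes h: "h \<in> infos G i" and C: "C \<in> infos_after G i h"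
    and k: "k < length z" "active G i (take k z)" "cellof G i (take k z) = C"
  shows "\<exists>k' \<le> k. take k' z \<in> h"
proof -
  obtain y m where y: "C \<in> infos G i" "y \<in> C" "m \<le> length y" "take m y \<in> h"
    using C unfolding infos_after_def by blast
  have zk: "take k z \<in> C"
    using cellof_mem(2)[OF k(2)] k(3) by simp
  show ?thesis
  proof (cases "m = length y")
    case True
    then have "C = h"
      using infos_disjoint[OF y(1) h y(2)] y(4) by simp
    then show ?thesis
      using zk by blast
  next
    case False
    then have m: "m < length y"
      using y(3) by simp
    have "(h, (y ! m) i) \<in> set (experience G i y)"
      unfolding experience_mem
      by (rule exI[of _ m]) (simp add: m infoset_active[OF h y(4)] cellof_eqI[OF h y(4)])
    then have "(h, (y ! m) i) \<in> set (experience G i (take k z))"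
      using perfect_recall[OF y(1,2) zk] by simp
    then obtain k' where k': "k' < length (take k z)" "active G i (take k' (take k z))"
        "h = cellof G i (take k' (take k z))"
      unfolding experience_mem by blast
    then have "k' \<le> k" "take k' (take k z) = take k' z"
      by simp_all
    then show ?thesis
      using cellof_mem(2)[OF k'(2)] k'(3) by auto
  qed
qed

lemma experience_before_after:
  assumes h: "h \<in> infos G i" and x: "x \<in> h" and z: "take (length x) z = x"
    and p: "(C, a) \<in> set (experience G i z)" and C: "C \<notin> infos_after G i h"
  shows "(C, a) \<in> set (experience G i x)"
proof -
  obtain k where k: "k < length z" "active G i (take k z)"
    "C = cellof G i (take k z)" "a = (z ! k) i"
    using p unfolding experience_mem by auto
  have "length x \<le> length z"
    using arg_cong[OF z, of length] by simp
  have "k < length x"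
  proof (rule ccontr)
    assume "\<not> k < length x"
    then have "length x \<le> length (take k z)" "take (length x) (take k z) = x"
      using z \<open>length x \<le> length z\<close> by (simp_all add: min_def)
    moreover have "C \<in> infos G i" "take k z \<in> C"
      using cellof_mem[OF k(2)] k(3) by simp_all
    ultimately have "C \<in> infos_after G i h"
      unfolding infos_after_def using x
      by (intro CollectI conjI bexI[of _ "take k z"] exI[of _ "length x"]) simp_all
    then show False
      using C by simp
  qed
  then have "take k x = take k z" "x ! k = z ! k"
    using z by (metis min.strict_order_iff take_take, metis nth_take)
  then show ?thesis
    unfolding experience_mem using k \<open>k < length x\<close> by metis
qed

lemma consistent_splice_reached:
  assumes h: "h \<in> infos G i" and x: "x \<in> h" and z: "take (length x) z = x"
    and "consistent G i \<sigma> x" "consistent G i \<sigma>' x"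
  shows "consistent G i (splice_after G i h \<sigma> \<sigma>') z \<longleftrightarrow> consistent G i \<sigma>' z"
proof -
  have "splice_after G i h \<sigma> \<sigma>' C = \<sigma>' C" if "(C, a) \<in> set (experience G i z)" for C a
    using experience_before_after[OF h x z that] assms(4,5)
    unfolding splice_after_def consistent_iff_experience by fastforce
  then show ?thesis
    unfolding consistent_iff_experience by fastforce
qed

lemma consistent_splice_avoided:
  assumes h: "h \<in> infos G i" and avoid: "\<And>k. take k z \<notin> h"
  shows "consistent G i (splice_after G i h \<sigma> \<sigma>') z \<longleftrightarrow> consistent G i \<sigma> z"
proof -
  have "splice_after G i h \<sigma> \<sigma>' C = \<sigma> C" if "(C, a) \<in> set (experience G i z)" for C a
    using that visit_after_passes_through[OF h] avoid
    unfolding splice_after_def experience_mem by (metis prod.inject)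
  then show ?thesis
    unfolding consistent_iff_experience by fastforce
qed

lemma outcome_splice_reached:
  assumes h: "h \<in> infos G i"
    and \<sigma>_h: "\<And>x. x \<in> h \<Longrightarrow> consistent G i \<sigma> x" and \<sigma>'_h: "\<And>x. x \<in> h \<Longrightarrow> consistent G i \<sigma>' x"
    and c': "c' \<in> strats G i" "\<And>z. cconsistent G i c' z \<longleftrightarrow> consistent G i \<sigma>' z"
    and c'': "c'' \<in> strats G i"
      "\<And>z. cconsistent G i c'' z \<longleftrightarrow> consistent G i (splice_after G i h \<sigma> \<sigma>') z"
    and t: "t \<in> others i (strats G)" "t \<in> others_at G i h"
  shows "outcome G (t(i := c'')) = outcome G (t(i := c'))"
proof (rule outcome_cong)
  obtain x where x: "x \<in> h" "\<And>j. j \<noteq> i \<Longrightarrow> cconsistent G j (t j) x"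
    using t(2) unfolding others_at_def by blast
  have splice_x: "consistent G i (splice_after G i h \<sigma> \<sigma>') x"
    using consistent_splice_reached[OF h x(1) _ \<sigma>_h \<sigma>'_h, of x] \<sigma>'_h x(1) by simp
  have extends: "take (length x) z = x"
    if "z \<in> terminal G" "d \<in> strats G i" "cconsistent G i d x" "cconsistent G i d z"
      "\<forall>j. j \<noteq> i \<longrightarrow> cconsistent G j (t j) z" for z d
    by (rule terminal_extends_cconsistent_history[of "t(i := d)"])
      (use that t(1) x infoset_in_hist[OF h x(1)] in \<open>auto simp: others_def\<close>)
  fix z
  assume z: "z \<in> terminal G"
  have "cconsistent G i c'' z \<longleftrightarrow> cconsistent G i c' z"
    if opp: "\<forall>j. j \<noteq> i \<longrightarrow> cconsistent G j (t j) z"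
  proof
    assume "cconsistent G i c'' z"
    then have "take (length x) z = x"
      using extends[OF z c''(1) _ _ opp] splice_x c''(2) by blast
    then show "cconsistent G i c' z"
      using consistent_splice_reached[OF h x(1) _ \<sigma>_h[OF x(1)] \<sigma>'_h[OF x(1)]]
        \<open>cconsistent G i c'' z\<close> c'(2) c''(2) by blast
  next
    assume "cconsistent G i c' z"
    then have "take (length x) z = x"
      using extends[OF z c'(1) _ _ opp] \<sigma>'_h[OF x(1)] c'(2) by blast
    then show "cconsistent G i c'' z"
      using consistent_splice_reached[OF h x(1) _ \<sigma>_h[OF x(1)] \<sigma>'_h[OF x(1)]]
        \<open>cconsistent G i c' z\<close> c'(2) c''(2) by blast
  qed
  then show "(\<forall>j. cconsistent G j ((t(i := c'')) j) z) \<longleftrightarrow> (\<forall>j. cconsistent G j ((t(i := c')) j) z)"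
    unfolding cconsistent_fun_upd_iff by blast
qed

lemma outcome_splice_avoided:
  assumes h: "h \<in> infos G i"
    and c: "\<And>z. cconsistent G i c z \<longleftrightarrow> consistent G i \<sigma> z"
    and c'': "\<And>z. cconsistent G i c'' z \<longleftrightarrow> consistent G i (splice_after G i h \<sigma> \<sigma>') z"
    and t: "t \<in> others i (strats G)" "t \<notin> others_at G i h"
  shows "outcome G (t(i := c'')) = outcome G (t(i := c))"
proof (rule outcome_cong)
  fix z
  have "cconsistent G i c'' z \<longleftrightarrow> cconsistent G i c z"
    if opp: "\<forall>j. j \<noteq> i \<longrightarrow> cconsistent G j (t j) z"
  proof -
    have "take k z \<notin> h" for k
    proof
      assume "take k z \<in> h"
      moreover have "\<forall>j. j \<noteq> i \<longrightarrow> cconsistent G j (t j) (take k z)"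
        using opp by (simp add: cconsistent_take)
      ultimately have "t \<in> others_at G i h"
        using t(1) unfolding others_at_def by blast
      then show False
        using t(2) by contradiction
    qed
    then show ?thesis
      using consistent_splice_avoided[OF h, of z \<sigma> \<sigma>'] c[of z] c''[of z] by simp
  qed
  then show "(\<forall>j. cconsistent G j ((t(i := c'')) j) z) \<longleftrightarrow> (\<forall>j. cconsistent G j ((t(i := c)) j) z)"
    unfolding cconsistent_fun_upd_iff by blast
qed

lemma splice_strategy:
  assumes h: "h \<in> infos G i" and c: "c \<in> strats_at G i h" and c': "c' \<in> strats_at G i h"
  shows "\<exists>c'' \<in> strats G i. \<forall>t \<in> others i (strats G). outcome G (t(i := c''))
           = (if t \<in> others_at G i h then outcome G (t(i := c')) else outcome G (t(i := c)))"
proof -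
  have allowed: "consistent G i \<tau> x"
    if d: "d \<in> strats_at G i h" "\<And>z. cconsistent G i d z \<longleftrightarrow> consistent G i \<tau> z" and x: "x \<in> h"
    for d \<tau> x
  proof -
    obtain y where "y \<in> h" "consistent G i \<tau> y"
      using d unfolding strats_at_def by blast
    then show ?thesis
      using consistent_infoset_cong[OF h _ x] by blast
  qed
  have "c \<in> strats G i" "c' \<in> strats G i"
    using c c' unfolding strats_at_def by simp_all
  obtain \<sigma> where \<sigma>: "\<sigma> \<in> stdstrats G i" "\<And>z. cconsistent G i c z \<longleftrightarrow> consistent G i \<sigma> z"
    using strat_representative[OF \<open>c \<in> strats G i\<close>] by blast
  obtain \<sigma>' where \<sigma>': "\<sigma>' \<in> stdstrats G i" "\<And>z. cconsistent G i c' z \<longleftrightarrow> consistent G i \<sigma>' z"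
    using strat_representative[OF \<open>c' \<in> strats G i\<close>] by blast
  let ?\<sigma>'' = "splice_after G i h \<sigma> \<sigma>'"
  have "?\<sigma>'' \<in> stdstrats G i"
    using splice_after_stdstrat[OF \<sigma>(1) \<sigma>'(1)] .
  then have c'': "beq G i `` {?\<sigma>''} \<in> strats G i"
    "\<And>z. cconsistent G i (beq G i `` {?\<sigma>''}) z \<longleftrightarrow> consistent G i ?\<sigma>'' z"
    by (simp_all add: class_in_strats cconsistent_class_iff)
  show ?thesis
  proof (rule bexI[OF _ c''(1)], intro ballI)
    fix t
    assume t: "t \<in> others i (strats G)"
    show "outcome G (t(i := beq G i `` {?\<sigma>''}))
          = (if t \<in> others_at G i h then outcome G (t(i := c')) else outcome G (t(i := c)))"
      using outcome_splice_reached[OF h allowed[OF c \<sigma>(2)] allowed[OF c' \<sigma>'(2)]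
          \<open>c' \<in> strats G i\<close> \<sigma>'(2) c'' t]
        outcome_splice_avoided[OF h \<sigma>(2) c''(2) t] by simp
  qed
qed

section \<open>Lexicographic best replies survive elimination\<close>

lemma exists_utility: "\<exists>u. u \<in> utils G i"
proof -
  let ?T = "terminal G"
  have total: "\<forall>z \<in> ?T. \<forall>z' \<in> ?T. pref G i z z' \<or> pref G i z' z"
    and trans: "\<forall>z1 \<in> ?T. \<forall>z2 \<in> ?T. \<forall>z3 \<in> ?T. pref G i z1 z2 \<longrightarrow> pref G i z2 z3 \<longrightarrow> pref G i z1 z3"
    using pref_weak_order by blast+
  have "finite ?T"
    using finite_subset[OF _ finite_hist] terminal_in_hist by blast
  define u where "u z = real (card {w \<in> ?T. pref G i z w})" for z
  have "u z \<ge> u z' \<longleftrightarrow> pref G i z z'" if z: "z \<in> ?T" "z' \<in> ?T" for z z'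
  proof
    assume "pref G i z z'"
    then have "{w \<in> ?T. pref G i z' w} \<subseteq> {w \<in> ?T. pref G i z w}"
      using trans z by blast
    then show "u z \<ge> u z'"
      unfolding u_def using \<open>finite ?T\<close> by (simp add: card_mono)
  next
    assume "u z \<ge> u z'"
    show "pref G i z z'"
    proof (rule ccontr)
      assume np: "\<not> pref G i z z'"
      have "{w \<in> ?T. pref G i z w} \<subset> {w \<in> ?T. pref G i z' w}"
      proof
        show "{w \<in> ?T. pref G i z w} \<subseteq> {w \<in> ?T. pref G i z' w}"
          using trans total z np by blast
        have "pref G i z' z'"
          using total z by blast
        then show "{w \<in> ?T. pref G i z w} \<noteq> {w \<in> ?T. pref G i z' w}"
          using np z by blast
      qed
      then have "u z < u z'"
        unfolding u_def using \<open>finite ?T\<close> by (simp add: psubset_card_mono)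
      with \<open>u z \<ge> u z'\<close> show False
        by simp
    qed
  qed
  then show ?thesis
    unfolding utils_def by blast
qed

lemma cond_eventsD:
  assumes "E \<in> cond_events G i"
  shows "E \<subseteq> others i (strats G)" "E \<noteq> {}"
proof -
  obtain h where h: "h \<in> infos G i" "E = others_at G i h"
    using assms unfolding cond_events_def by blast
  then show "E \<subseteq> others i (strats G)"
    unfolding others_at_def by blast
  show "E \<noteq> {}"
    using others_at_nonempty[OF h(1)] h(2) by simp
qed

lemma is_cps_lex_belief:
  assumes n: "0 < n" and L0: "L 0 = others i (strats G)"
  shows "is_cps G i (lex_belief n L)"
  unfolding is_cps_def
proof (intro conjI ballI allI impI)
  fix E
  assume "E \<in> cond_events G i"
  then have E: "E \<subseteq> L 0" "E \<inter> L 0 \<noteq> {}" "finite E"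
    using cond_eventsD[of E] finite_subset[OF _ finite_others_strats] L0 by blast+
  have "deepest_layer n L E \<subseteq> E"
    unfolding deepest_layer_def by blast
  then show "cprob (lex_belief n L) (others i (strats G)) E = 1" "cprob (lex_belief n L) E E = 1"
    using cprob_lex_belief_eq_1[where L = L, OF n E(2)] E(1,3) L0 finite_others_strats by auto
next
  fix E t
  show "0 \<le> lex_belief n L E t"
    unfolding lex_belief_def by simp
next
  fix E E' A
  assume "E \<in> cond_events G i" "E' \<in> cond_events G i" "A \<subseteq> E'" "E' \<subseteq> E"
  then show "cprob (lex_belief n L) A E = cprob (lex_belief n L) A E' * cprob (lex_belief n L) E' E"
    using lex_belief_chain_rule[OF n] cond_eventsD finite_subset[OF _ finite_others_strats] L0
    by (metis inf.absorb1)
qed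

lemma lex_belief_in_cps_given:
  assumes n: "0 < n" and L0: "L 0 = others i (strats G)"
    and anti: "\<And>m m'. m \<le> m' \<Longrightarrow> L m' \<subseteq> L m" and m: "m < n" and Lm: "L m = others i R"
  shows "lex_belief n L \<in> cps_given G i R"
  unfolding cps_given_def
proof (intro CollectI conjI is_cps_lex_belief[where L = L, OF n L0] ballI impI)
  fix h
  assume h: "h \<in> infos G i" and "restr_at G i R h \<noteq> {} \<and> restr_others_at G i R h \<noteq> {}"
  then have meets: "others_at G i h \<inter> L m \<noteq> {}"
    unfolding restr_others_at_def Lm by blast
  have "others_at G i h \<inter> L 0 \<noteq> {}"
    using meets anti[of 0 m] by blast
  moreover have "restr_others_at G i R h \<subseteq> others i (strats G)"
    unfolding restr_others_at_def others_at_def by blast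
  then have "finite (restr_others_at G i R h)"
    using finite_others_strats by (rule finite_subset)
  moreover have "deepest_layer n L (others_at G i h) \<subseteq> restr_others_at G i R h"
    using deepest_layer_subset[where L = L, OF anti m meets]
    unfolding restr_others_at_def deepest_layer_def Lm by blast
  ultimately show "cprob (lex_belief n L) (restr_others_at G i R h) (others_at G i h) = 1"
    by (rule cprob_lex_belief_eq_1[where L = L, OF n])
qed

text \<open>Otherwise splicing \<open>s'\<close> into \<open>ss\<close> at \<open>h\<close> would improve \<open>ss\<close> on the deepest layer
  reached by \<open>h\<close> without changing any deeper layer.\<close>
lemma lex_maximizer_optimal_at:
  fixes u :: "('i, 'a) hist \<Rightarrow> real" and L :: "nat \<Rightarrow> ('i, 'a) profile set" and i :: 'i
  defines "U \<equiv> \<lambda>k s. \<Sum>t \<in> L k. u (outcome G (t(i := s)))"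
  assumes n: "0 < n" and L0: "L 0 = others i (strats G)" and L: "\<And>k. L k \<subseteq> L 0"
    and lex: "lex_maximizer n U (strats G i) ss"
    and h: "h \<in> infos G i" and ss: "ss \<in> strats_at G i h" and s': "s' \<in> strats_at G i h"
  shows "(\<Sum>t \<in> deepest_layer n L (others_at G i h). u (outcome G (t(i := s'))))
           \<le> (\<Sum>t \<in> deepest_layer n L (others_at G i h). u (outcome G (t(i := ss))))"
proof -
  let ?E = "others_at G i h"
  let ?d = "layer_depth n L ?E"
  let ?v = "\<lambda>s t. u (outcome G (t(i := s)))"
  let ?gain = "\<lambda>k. sum (?v s') (L k \<inter> ?E) - sum (?v ss) (L k \<inter> ?E)"
  obtain s'' where s'': "s'' \<in> strats G i"
    and spliced: "\<forall>t \<in> others i (strats G). outcome G (t(i := s''))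
      = (if t \<in> ?E then outcome G (t(i := s')) else outcome G (t(i := ss)))"
    using splice_strategy[OF h ss s'] by blast
  have E0: "?E \<inter> L 0 \<noteq> {}"
    using others_at_nonempty[OF h] L0 unfolding others_at_def by blast
  have gain: "U k s'' = U k ss + ?gain k" for k
  proof -
    have fin: "finite (L k)"
      using finite_subset[OF L[of k]] finite_others_strats L0 by simp
    have "U k s'' = sum (?v s'') (L k \<inter> ?E) + sum (?v s'') (L k - ?E)"
      unfolding U_def by (rule sum.Int_Diff[OF fin])
    also have "\<dots> = sum (?v s') (L k \<inter> ?E) + sum (?v ss) (L k - ?E)"
      using spliced L[of k] L0 by (intro arg_cong2[where f = "(+)"] sum.cong) auto
    also have "U k ss = sum (?v ss) (L k \<inter> ?E) + sum (?v ss) (L k - ?E)"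
      unfolding U_def by (rule sum.Int_Diff[OF fin])
    ultimately show ?thesis
      by simp
  qed
  have "U k s'' = U k ss" if "?d < k" "k < n" for k
  proof -
    have "L k \<inter> ?E = {}"
      using layer_depth_maximal[where L = L, OF n E0 that(2)] that(1) by fastforce
    then show ?thesis
      using gain[of k] by simp
  qed
  then have "U ?d s'' \<le> U ?d ss"
    using lex s'' layer_depth_less[where L = L, OF n E0] unfolding lex_maximizer_def by blast
  moreover have "L ?d \<inter> ?E = deepest_layer n L ?E"
    unfolding deepest_layer_def by blast
  ultimately show ?thesis
    using gain[of ?d] by simp
qed

lemma lex_maximizer_seq_rational:
  fixes u :: "('i, 'a) hist \<Rightarrow> real"
  assumes n: "0 < n" and u: "u \<in> utils G i" and m: "m < n" and ss: "ss \<in> osr G m i"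
    and lex: "lex_maximizer n (\<lambda>k s. \<Sum>t \<in> others i (osr G k). u (outcome G (t(i := s))))
                (strats G i) ss"
  shows "seq_rational G i (osr G m) ss"
proof -
  let ?L = "\<lambda>k. others i (osr G k)"
  have L0: "?L 0 = others i (strats G)"
    by (simp add: osr_def)
  have anti: "?L k' \<subseteq> ?L k" if "k \<le> k'" for k k'
    using osr_antimono[OF that] by (rule others_mono)
  have "(\<Sum>t \<in> others i (osr G m). u (outcome G (t(i := s'))) * lex_belief n ?L (others_at G i h) t)
      \<le> (\<Sum>t \<in> others i (osr G m). u (outcome G (t(i := ss))) * lex_belief n ?L (others_at G i h) t)"
    if h: "h \<in> infos_of G i ss"
      and ne: "restr_at G i (osr G m) h \<noteq> {} \<and> restr_others_at G i (osr G m) h \<noteq> {}"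
      and s': "s' \<in> restr_at G i (osr G m) h" for h s'
  proof -
    let ?D = "deepest_layer n ?L (others_at G i h)"
    have "others_at G i h \<inter> ?L m \<noteq> {}"
      using ne unfolding restr_others_at_def by blast
    then have "?D \<subseteq> others i (osr G m)"
      using deepest_layer_subset[where L = ?L and m = m and n = n and E = "others_at G i h",
          OF anti m]
      by simp
    moreover have "finite (others i (osr G m))"
      by (rule finite_others) (rule finite_osr)
    moreover have "(\<Sum>t \<in> ?D. u (outcome G (t(i := s')))) \<le> (\<Sum>t \<in> ?D. u (outcome G (t(i := ss))))"
      by (rule lex_maximizer_optimal_at[where L = ?L, OF n L0 anti[of 0] lex])
        (use h s' in \<open>simp_all add: infos_of_def restr_at_def\<close>)
    ultimately show ?thesis
      by (simp add: sum_lex_belief divide_right_mono)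
  qed
  moreover have "lex_belief n ?L \<in> cps_given G i (osr G m)"
    using lex_belief_in_cps_given[where L = ?L and R = "osr G m", OF n L0 anti m refl] .
  ultimately show ?thesis
    unfolding seq_rational_def using ss u by blast
qed

lemma osr_nonempty: "osr G n i \<noteq> {}"
proof (cases "n = 0")
  case True
  then show ?thesis
    using strats_nonempty by (simp add: osr_def)
next
  case False
  obtain u where u: "u \<in> utils G i"
    using exists_utility by blast
  obtain ss where lex: "lex_maximizer n
      (\<lambda>k s. \<Sum>t \<in> others i (osr G k). u (outcome G (t(i := s)))) (strats G i) ss"
    using lex_maximizer_exists[OF finite_strats strats_nonempty] by blast
  have "ss \<in> osr G m i" if "m \<le> n" for m
    using that
  proof (induction m)
    case 0
    then show ?case
      using lex by (simp add: osr_def lex_maximizer_def)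
  next
    case (Suc m)
    then have "ss \<in> osr G m i" "m < n"
      by simp_all
    then show ?case
      using lex_maximizer_seq_rational[OF _ u _ _ lex] False by (simp add: osr_Suc osr_step_def)
  qed
  then show ?thesis
    by blast
qed

lemma osr_stabilizes: "\<exists>K. \<forall>n \<ge> K. osr G n = osr G K"
proof -
  let ?B = "Pow (\<Union>j. strats G j)"
  let ?F = "{R :: 'i \<Rightarrow> ('i, 'a) strat set.
              \<forall>j. (j \<in> UNIV \<longrightarrow> R j \<in> ?B) \<and> (j \<notin> UNIV \<longrightarrow> R j = undefined)}"
  have "osr G n j \<in> ?B" for n j
    using osr_subset_strats[of G n j] by blast
  then have "range (\<lambda>n. osr G n) \<subseteq> ?F"
    by blast
  moreover have "finite ?F"
    by (rule finite_set_of_finite_funs) (simp_all add: finite_strats)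
  ultimately have fin: "finite (range (\<lambda>n. osr G n))"
    by (rule finite_subset)
  have dec: "osr_step G R \<le> R" for R
    unfolding osr_step_def le_fun_def by auto
  have "\<exists>K. \<forall>n \<ge> K. (osr_step G ^^ n) (strats G) = (osr_step G ^^ K) (strats G)"
    by (rule funpow_decreasing_stabilizes[OF dec fin[unfolded osr_def]])
  then show ?thesis
    unfolding osr_def .
qed

end

theorem corollary1:
  fixes G :: "('i::finite, 'a) game"
  assumes "finite_game G"
  shows "(\<forall>k. prodR (osr G k) \<noteq> {}) \<and> osr_inf G \<noteq> {}
         \<and> (\<exists>K. prodR (osr G K) = prodR (osr G (Suc K))
                \<and> prodR (osr G (Suc K)) = osr_inf G
                \<and> osr_inf G \<noteq> {})"
proof -
  interpret finite_dyn_game G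
    by (rule finite_dyn_game.intro) (rule assms)
  obtain K where "\<forall>n \<ge> K. osr G n = osr G K"
    using osr_stabilizes by blast
  then have stable: "osr G n = osr G K" if "K \<le> n" for n
    using that by blast
  have nonempty: "prodR (osr G k) \<noteq> {}" for k
    by (rule prodR_nonempty) (rule osr_nonempty)
  have "osr_inf G = prodR (osr G K)"
    by (rule osr_inf_eq_stable) (rule stable)
  then show ?thesis
    using nonempty stable[of "Suc K"] by (intro conjI allI exI[of _ K]) simp_all
qed

end
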